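(* Consider the class of three-valued logics (as defined in the context) that are paraconsistent and have properties (a) and (b). There is exactly one logic in this class whose logical equivalence relation $\equiv$ satisfies, for all formulas $A,B,C$, all of the following: (1) $A\wedge\bot \equiv \bot$; (2) $A\vee\top\equiv\top$; (3) $A\wedge\top\equiv A$; (4) $A\vee\bot\equiv A$; (5) $A\wedge A\equiv A$; (6) $A\vee A\equiv A$; (7) $A\wedge B\equiv B\wedge A$; (8) $A\vee B\equiv B\vee A$; (9) $\neg\neg A\equiv A$; (10) $(A\vee\neg A)\to B\equiv B$; (11) $(A\to B)\wedge(A\to C)\equiv A\to(B\wedge C)$; (12) $(A\to C)\wedge(B\to C)\equiv (A\vee B)\to C$.
   Context: Formulas are built from a countably infinite set of propositional variables, the constant $\bot$, the unary connective $\neg$ and the binary connectives $\wedge,\vee,\to$; $\top$ abbreviates $\neg\bot$. Let $V=\{t,f,b\}$. A three-valued logic is specified by truth functions $\neg^M:V\to V$ and $\wedge^M,\vee^M,\to^M:V^2\to V$ that agree with the classical truth functions of negation, conjunction, disjunction and material implication on $\{t,f\}$, with $\bot$ interpreted as $f$; two logics are different iff at least one of these truth functions differs. A valuation is a map $\nu$ from formulas to $V$ with $\nu(\bot)=f$, $\nu(\neg A)=\neg^M(\nu(A))$, $\nu(A\wedge B)=\wedge^M(\nu(A),\nu(B))$, and similarly for $\vee,\to$ (values on propositional variables are arbitrary). The designated values are $t$ and $b$: $\Gamma\models A$ iff for every valuation $\nu$, either $\nu(A')=f$ for some $A'\in\Gamma$ or $\nu(A)\in\{t,b\}$. The logic is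 paraconsistent if there are formulas $A,B$ with $\{A,\neg A\}\not\models B$. Its logical equivalence relation is: $A\equiv B$ iff $\nu(A)=\nu(B)$ for every valuation $\nu$. Property (a): for every set of formulas $\Gamma$ and formula $A$, $\Gamma\models A$ implies $\Gamma\models_{\mathrm{CPL}}A$, where $\models_{\mathrm{CPL}}$ is the consequence relation of classical propositional logic (with $\bot$ false, $\to$ material implication). Property (b): for all sets $\Gamma$ and formulas $A,B,C$: (b1) $\Gamma\cup\{A\}\models B$ iff $\Gamma\models A\to B$; (b2) $\Gamma\models A\wedge B$ iff $\Gamma\models A$ and $\Gamma\models B$; (b3) $\Gamma\cup\{A\vee B\}\models C$ iff $\Gamma\cup\{A\}\models C$ and $\Gamma\cup\{B\}\models C$. (Under these conventions there are exactly 8192 such paraconsistent logics with properties (a) and (b).) *)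

theory Defs
  imports Main
begin

datatype tv = T | F | B

datatype fm = Var nat | Bot | Neg fm | Conj fm fm | Disj fm fm | Imp fm fm

definition Top :: fm where "Top = Neg Bot"

text \<open>A three-valued logic is given by its four truth functions (negation, conjunction,
disjunction, implication). Two logics are equal iff all four functions coincide.\<close>
type_synonym logic = "(tv \<Rightarrow> tv) \<times> (tv \<Rightarrow> tv \<Rightarrow> tv) \<times> (tv \<Rightarrow> tv \<Rightarrow> tv) \<times> (tv \<Rightarrow> tv \<Rightarrow> tv)"

definition classical_tv :: "bool \<Rightarrow> tv" where
  "classical_tv b = (if b then T else F)"

definition agrees_classical :: "logic \<Rightarrow> bool" where
  "agrees_classical L = (case L of (ng, cj, dj, im) \<Rightarrow>
     (\<forall>p q. ng (classical_tv p) = classical_tv (\<not> p)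
        \<and> cj (classical_tv p) (classical_tv q) = classical_tv (p \<and> q)
        \<and> dj (classical_tv p) (classical_tv q) = classical_tv (p \<or> q)
        \<and> im (classical_tv p) (classical_tv q) = classical_tv (p \<longrightarrow> q)))"

fun eval :: "logic \<Rightarrow> (nat \<Rightarrow> tv) \<Rightarrow> fm \<Rightarrow> tv" where
  "eval L v (Var n) = v n"
| "eval L v Bot = F"
| "eval L v (Neg A) = fst L (eval L v A)"
| "eval L v (Conj A C) = fst (snd L) (eval L v A) (eval L v C)"
| "eval L v (Disj A C) = fst (snd (snd L)) (eval L v A) (eval L v C)"
| "eval L v (Imp A C) = snd (snd (snd L)) (eval L v A) (eval L v C)"

definition designated :: "tv \<Rightarrow> bool" where
  "designated x = (x = T \<or> x = B)"

definition cons :: "logic \<Rightarrow> fm set \<Rightarrow> fm \<Rightarrow> bool" where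
  "cons L \<Gamma> A = (\<forall>v. (\<exists>A'\<in>\<Gamma>. eval L v A' = F) \<or> designated (eval L v A))"

fun ceval :: "(nat \<Rightarrow> bool) \<Rightarrow> fm \<Rightarrow> bool" where
  "ceval w (Var n) = w n"
| "ceval w Bot = False"
| "ceval w (Neg A) = (\<not> ceval w A)"
| "ceval w (Conj A C) = (ceval w A \<and> ceval w C)"
| "ceval w (Disj A C) = (ceval w A \<or> ceval w C)"
| "ceval w (Imp A C) = (ceval w A \<longrightarrow> ceval w C)"

definition cpl_cons :: "fm set \<Rightarrow> fm \<Rightarrow> bool" where
  "cpl_cons \<Gamma> A = (\<forall>w. (\<forall>A'\<in>\<Gamma>. ceval w A') \<longrightarrow> ceval w A)"

definition paraconsistent :: "logic \<Rightarrow> bool" where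
  "paraconsistent L = (\<exists>A C. \<not> cons L {A, Neg A} C)"

definition prop_a :: "logic \<Rightarrow> bool" where
  "prop_a L = (\<forall>\<Gamma> A. cons L \<Gamma> A \<longrightarrow> cpl_cons \<Gamma> A)"

definition prop_b :: "logic \<Rightarrow> bool" where
  "prop_b L = (\<forall>\<Gamma> A C D.
      (cons L (\<Gamma> \<union> {A}) C \<longleftrightarrow> cons L \<Gamma> (Imp A C))
    \<and> (cons L \<Gamma> (Conj A C) \<longleftrightarrow> cons L \<Gamma> A \<and> cons L \<Gamma> C)
    \<and> (cons L (\<Gamma> \<union> {Disj A C}) D \<longleftrightarrow> cons L (\<Gamma> \<union> {A}) D \<and> cons L (\<Gamma> \<union> {C}) D))"

definition equiv_fm :: "logic \<Rightarrow> fm \<Rightarrow> fm \<Rightarrow> bool" where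
  "equiv_fm L A C = (\<forall>v. eval L v A = eval L v C)"

definition in_class :: "logic \<Rightarrow> bool" where
  "in_class L = (agrees_classical L \<and> paraconsistent L \<and> prop_a L \<and> prop_b L)"

definition equiv_laws :: "logic \<Rightarrow> bool" where
  "equiv_laws L = (\<forall>A C D.
      equiv_fm L (Conj A Bot) Bot
    \<and> equiv_fm L (Disj A Top) Top
    \<and> equiv_fm L (Conj A Top) A
    \<and> equiv_fm L (Disj A Bot) A
    \<and> equiv_fm L (Conj A A) A
    \<and> equiv_fm L (Disj A A) A
    \<and> equiv_fm L (Conj A C) (Conj C A)
    \<and> equiv_fm L (Disj A C) (Disj C A)
    \<and> equiv_fm L (Neg (Neg A)) A
    \<and> equiv_fm L (Imp (Disj A (Neg A)) C) C
    \<and> equiv_fm L (Conj (Imp A C) (Imp A D)) (Imp A (Conj C D))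
    \<and> equiv_fm L (Conj (Imp A D) (Imp C D)) (Imp (Disj A C) D))"

end

theory Submission
  imports Defs
begin

text \<open>
  The unique logic is Avron's PAC: the connectives \<open>\<not>, \<and>, \<or>\<close> of Priest's LP
  (order \<open>f < b < t\<close>, \<open>\<not>b = b\<close>) together with the implication that is \<open>t\<close> on a
  false antecedent and returns its consequent otherwise. Its connectives are classical with
  respect to designation, which gives (a) and (b); paraconsistency is \<open>\<not>b \<noteq> f\<close>.
  Conversely, paraconsistency and double negation force \<open>\<not>b = b\<close>; the lattice laws
  (1)--(8) fix \<open>\<and>\<close> and \<open>\<or>\<close> at \<open>b\<close>; law (10) gives \<open>b \<rightarrow> y = t \<rightarrow> y = y\<close>, and
  law (11) with \<open>A = f\<close> gives \<open>f \<rightarrow> b = t\<close>.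
\<close>

lemma all_tv: "(\<forall>x. P x) \<longleftrightarrow> P T \<and> P F \<and> P B"
  by (metis tv.exhaust)

fun pac_neg :: "tv \<Rightarrow> tv" where
  "pac_neg T = F" | "pac_neg F = T" | "pac_neg B = B"

fun pac_conj :: "tv \<Rightarrow> tv \<Rightarrow> tv" where
  "pac_conj F y = F" | "pac_conj x F = F" | "pac_conj T y = y" | "pac_conj B y = B"

fun pac_disj :: "tv \<Rightarrow> tv \<Rightarrow> tv" where
  "pac_disj T y = T" | "pac_disj x T = T" | "pac_disj F y = y" | "pac_disj B y = B"

fun pac_imp :: "tv \<Rightarrow> tv \<Rightarrow> tv" where
  "pac_imp F y = T" | "pac_imp x y = y"

definition PAC :: logic where
  "PAC = (pac_neg, pac_conj, pac_disj, pac_imp)"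

lemma agrees_classical_iff:
  "agrees_classical (ng, cj, dj, im) \<longleftrightarrow>
     ng T = F \<and> ng F = T
   \<and> cj T T = T \<and> cj T F = F \<and> cj F T = F \<and> cj F F = F
   \<and> dj T T = T \<and> dj T F = T \<and> dj F T = T \<and> dj F F = F
   \<and> im T T = T \<and> im T F = F \<and> im F T = T \<and> im F F = T"
  by (auto simp: agrees_classical_def classical_tv_def all_bool_eq)

lemma eval_classical_tv:
  assumes "agrees_classical L"
  shows "eval L (classical_tv \<circ> w) A = classical_tv (ceval w A)"
proof -
  obtain ng cj dj im where L: "L = (ng, cj, dj, im)"
    by (cases L) auto
  show ?thesis
    using assms by (induction A) (auto simp: L agrees_classical_iff classical_tv_def)
qed

lemma prop_a_if_agrees_classical:
  assumes "agrees_classical L"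
  shows "prop_a L"
  unfolding prop_a_def cpl_cons_def
proof (intro allI impI)
  fix \<Gamma> A w
  assume "cons L \<Gamma> A" and "\<forall>A'\<in>\<Gamma>. ceval w A'"
  moreover have "(\<exists>A'\<in>\<Gamma>. eval L (classical_tv \<circ> w) A' = F) \<or> designated (eval L (classical_tv \<circ> w) A)"
    using \<open>cons L \<Gamma> A\<close> by (simp add: cons_def)
  ultimately show "ceval w A"
    by (auto simp: eval_classical_tv[OF assms] classical_tv_def designated_def split: if_splits)
qed

lemma cons_iff_designated:
  "cons L \<Gamma> A \<longleftrightarrow> (\<forall>v. (\<exists>A'\<in>\<Gamma>. \<not> designated (eval L v A')) \<or> designated (eval L v A))"
proof -
  have "x = F \<longleftrightarrow> \<not> designated x" for x
    by (cases x) (auto simp: designated_def)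
  then show ?thesis
    by (simp add: cons_def)
qed

lemma prop_b_if_designation_classical:
  assumes "\<forall>x y. designated (cj x y) \<longleftrightarrow> designated x \<and> designated y"
    and "\<forall>x y. designated (dj x y) \<longleftrightarrow> designated x \<or> designated y"
    and "\<forall>x y. designated (im x y) \<longleftrightarrow> \<not> designated x \<or> designated y"
  shows "prop_b (ng, cj, dj, im)"
  unfolding prop_b_def cons_iff_designated by (auto simp: assms)

lemma paraconsistent_iff:
  assumes "agrees_classical (ng, cj, dj, im)"
  shows "paraconsistent (ng, cj, dj, im) \<longleftrightarrow> ng B \<noteq> F"
proof
  assume "paraconsistent (ng, cj, dj, im)"
  then obtain v A where "eval (ng, cj, dj, im) v A \<noteq> F" "ng (eval (ng, cj, dj, im) v A) \<noteq> F"
    by (auto simp: paraconsistent_def cons_def)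
  with assms show "ng B \<noteq> F"
    by (cases "eval (ng, cj, dj, im) v A") (auto simp: agrees_classical_iff)
next
  assume "ng B \<noteq> F"
  then have "\<not> cons (ng, cj, dj, im) {Var 0, Neg (Var 0)} Bot"
    by (auto simp: cons_def designated_def intro!: exI[of _ "\<lambda>_. B"])
  then show "paraconsistent (ng, cj, dj, im)"
    unfolding paraconsistent_def by blast
qed

text \<open>The laws (1)--(12) read off at the level of truth values; \<open>ng F\<close> plays the role of \<open>\<top>\<close>.\<close>

definition truth_value_laws :: "logic \<Rightarrow> bool" where
  "truth_value_laws L = (case L of (ng, cj, dj, im) \<Rightarrow> (\<forall>a b c.
      cj a F = F
    \<and> dj a (ng F) = ng F
    \<and> cj a (ng F) = a
    \<and> dj a F = a
    \<and> cj a a = a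
    \<and> dj a a = a
    \<and> cj a b = cj b a
    \<and> dj a b = dj b a
    \<and> ng (ng a) = a
    \<and> im (dj a (ng a)) b = b
    \<and> cj (im a b) (im a c) = im a (cj b c)
    \<and> cj (im a c) (im b c) = im (dj a b) c))"

lemma equiv_laws_iff_truth_value_laws:
  "equiv_laws (ng, cj, dj, im) \<longleftrightarrow> truth_value_laws (ng, cj, dj, im)"
proof
  assume laws: "equiv_laws (ng, cj, dj, im)"
  show "truth_value_laws (ng, cj, dj, im)"
    unfolding truth_value_laws_def prod.case
    apply (intro allI)
    subgoal for a b c
      using laws[unfolded equiv_laws_def equiv_fm_def,
                 THEN spec[of _ "Var 0"], THEN spec[of _ "Var 1"], THEN spec[of _ "Var 2"]]
      by (auto dest!: spec[of _ "\<lambda>n. if n = 0 then a else if n = 1 then b else c"] simp: Top_def)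
    done
next
  assume "truth_value_laws (ng, cj, dj, im)"
  then show "equiv_laws (ng, cj, dj, im)"
    unfolding truth_value_laws_def equiv_laws_def equiv_fm_def Top_def prod.case eval.simps fst_conv snd_conv
    by blast
qed

lemma PAC_in_class: "in_class PAC"
proof -
  have classical: "agrees_classical PAC"
    by (simp add: PAC_def agrees_classical_iff)
  moreover have "prop_b PAC"
    unfolding PAC_def
    by (rule prop_b_if_designation_classical) (simp_all add: designated_def all_tv)
  ultimately show ?thesis
    using paraconsistent_iff prop_a_if_agrees_classical
    by (auto simp: in_class_def PAC_def)
qed

lemma PAC_truth_value_laws: "truth_value_laws PAC"
  by (simp add: truth_value_laws_def PAC_def all_tv)

lemma truth_value_laws_unique:
  assumes classical: "agrees_classical (ng, cj, dj, im)"
    and paraconsistent: "ng B \<noteq> F"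
    and laws: "truth_value_laws (ng, cj, dj, im)"
  shows "(ng, cj, dj, im) = PAC"
proof -
  note cl = classical[unfolded agrees_classical_iff]
  note law = laws[unfolded truth_value_laws_def prod.case, rule_format]
  have neg_B: "ng B = B"
    using law[of B] cl paraconsistent by (cases "ng B") auto
  have conj_B: "cj B B = B" "cj B T = B" "cj T B = B" "cj B F = F" "cj F B = F"
    using law[of B T] law[of B F] law[of T B] law[of F B] cl by auto
  have disj_B: "dj B B = B" "dj B T = T" "dj T B = T" "dj B F = B" "dj F B = B"
    using law[of B T] law[of B F] law[of T B] law[of F B] cl by auto
  have imp_designated: "im T y = y" "im B y = y" for y
    using law[of T y] law[of B y] cl neg_B disj_B by auto
  have "cj (im F B) T = T"
    using law[of F B F] cl conj_B by auto
  then have imp_F_B: "im F B = T"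
    using cl conj_B by (cases "im F B") auto
  show ?thesis
    unfolding PAC_def
    by (simp add: fun_eq_iff all_tv cl neg_B conj_B disj_B imp_designated imp_F_B)
qed

theorem theorem2:
  shows "\<exists>!L. in_class L \<and> equiv_laws L"
proof (rule ex1I)
  show "in_class PAC \<and> equiv_laws PAC"
    using PAC_in_class PAC_truth_value_laws
    by (simp add: PAC_def equiv_laws_iff_truth_value_laws)
next
  fix L
  assume L_laws: "in_class L \<and> equiv_laws L"
  obtain ng cj dj im where L: "L = (ng, cj, dj, im)"
    by (cases L)
  show "L = PAC"
    using L_laws truth_value_laws_unique
    by (auto simp: L in_class_def paraconsistent_iff equiv_laws_iff_truth_value_laws)
qed

end
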